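(* Let $\xi_0,\dots,\xi_{m-1}\in\mathbb{Q}_p$. If $\sum_{j=0}^{m-1}\chi(\xi_j)=0$, then $p$ divides $m$ and $\sum_{j=0}^{m-1}\chi(x\xi_j)=0$ for every $x\in\mathbb{Z}_p^\times$.
   Context: $p\ge2$ is a prime and $\mathbb{Z}_p^\times=\{x\in\mathbb{Q}_p:|x|_p=1\}$ is the group of units of $\mathbb{Z}_p$. Characters: $\chi(x)=e^{2\pi i\{x\}}$, where $\{x\}=\sum_{n=v_p(x)}^{-1}a_np^n$ is the fractional part of $x=\sum_{n\ge v_p(x)}a_np^n$ with digits $a_n\in\{0,\dots,p-1\}$. *)

theory Defs
  imports Complex_Main "HOL-Computational_Algebra.Primes"
begin

text \<open>p-adic integers as the inverse limit of Z/p^n Z: a compatible sequence of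
  residues a n in {0..<p^n} (a n = the first n digits of the p-adic expansion).\<close>
definition Zp :: "nat \<Rightarrow> (nat \<Rightarrow> int) set" where
  "Zp p = {a. \<forall>n. 0 \<le> a n \<and> a n < int p ^ n \<and> a (Suc n) mod (int p ^ n) = a n}"

text \<open>Units of Z_p: elements of absolute value 1, i.e. not divisible by p.\<close>
definition Zp_units :: "nat \<Rightarrow> (nat \<Rightarrow> int) set" where
  "Zp_units p = {a \<in> Zp p. a 1 \<noteq> 0}"

text \<open>Q_p = Z_p[1/p]: a pair (k, a) represents the p-adic number a / p^k.\<close>
definition Qp :: "nat \<Rightarrow> (nat \<times> (nat \<Rightarrow> int)) set" where
  "Qp p = {(k, a). a \<in> Zp p}"

definition zp_mult :: "nat \<Rightarrow> (nat \<Rightarrow> int) \<Rightarrow> (nat \<Rightarrow> int) \<Rightarrow> (nat \<Rightarrow> int)" where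
  "zp_mult p x a = (\<lambda>n. (x n * a n) mod (int p ^ n))"

definition qp_scale :: "nat \<Rightarrow> (nat \<Rightarrow> int) \<Rightarrow> nat \<times> (nat \<Rightarrow> int) \<Rightarrow> nat \<times> (nat \<Rightarrow> int)" where
  "qp_scale p x \<xi> = (fst \<xi>, zp_mult p x (snd \<xi>))"

text \<open>Fractional part {a/p^k} = (a mod p^k)/p^k = (a k)/p^k, i.e. the sum of the
  digits of negative index times the corresponding powers of p.\<close>
definition qp_frac :: "nat \<Rightarrow> nat \<times> (nat \<Rightarrow> int) \<Rightarrow> real" where
  "qp_frac p \<xi> = real_of_int (snd \<xi> (fst \<xi>)) / real p ^ fst \<xi>"

definition chi :: "nat \<Rightarrow> nat \<times> (nat \<Rightarrow> int) \<Rightarrow> complex" where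
  "chi p \<xi> = cis (2 * pi * qp_frac p \<xi>)"

end

theory Submission
  imports Defs "HOL-Computational_Algebra.Polynomial"
begin

text \<open>Choose N with p^N a common denominator of all \<xi>_j and let \<zeta> = e^{2\<pi>i/p^N}. Then
  \<chi>(\<xi>_j) = \<zeta>^{b_j} for natural numbers b_j, and multiplying by a unit x replaces \<zeta> by
  \<zeta>^y with p \<nmid> y (y = x mod p^N). So the integer polynomial P = \<Sum> X^{b_j} vanishes at \<zeta>.
  The cyclotomic polynomial \<Phi> = \<Phi>_{p^N}(X) = \<Sum>_{k<p} X^{k p^{N-1}} is irreducible over \<int>
  (Eisenstein after X \<mapsto> X + 1), hence it is the minimal polynomial of \<zeta> and divides P.
  Evaluating at 1 gives m = P(1) = p Q(1), and \<Phi> also vanishes at every conjugate \<zeta>^y.\<close>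

lemma prime_dvd_power_add_sub_power:
  fixes x y :: "'a::comm_ring_1"
  assumes "prime p"
  shows "of_nat p dvd (x + y) ^ p - x ^ p - y ^ p"
proof -
  have p0: "p > 0" using assms prime_gt_0_nat by blast
  have "(x + y) ^ p = (\<Sum>k\<le>p. of_nat (p choose k) * x ^ k * y ^ (p - k))"
    by (rule binomial_ring)
  also have "{..p} = insert 0 (insert p {1..<p})" using p0 by auto
  finally have "(x + y) ^ p - x ^ p - y ^ p = (\<Sum>k\<in>{1..<p}. of_nat (p choose k) * x ^ k * y ^ (p - k))"
    using p0 by (simp add: algebra_simps)
  also have "of_nat p dvd \<dots>"
  proof (rule dvd_sum)
    fix k assume "k \<in> {1..<p}"
    then have "p dvd p choose k" using assms by (intro dvd_choose_prime) auto
    then obtain c where "p choose k = p * c" by blast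
    then show "of_nat p dvd of_nat (p choose k) * x ^ k * y ^ (p - k)"
      by (simp add: mult.assoc)
  qed
  finally show ?thesis .
qed

lemma prime_dvd_power_add_sub_power_prime_power:
  fixes x y :: "'a::comm_ring_1"
  assumes "prime p"
  shows "of_nat p dvd (x + y) ^ p ^ k - x ^ p ^ k - y ^ p ^ k"
proof (induction k)
  case 0
  show ?case by simp
next
  case (Suc k)
  let ?u = "x ^ p ^ k" and ?v = "y ^ p ^ k"
  have "of_nat p dvd (x + y) ^ p ^ k - (?u + ?v)"
    using Suc by (simp add: diff_diff_eq)
  then have "of_nat p dvd ((x + y) ^ p ^ k) ^ p - (?u + ?v) ^ p"
    unfolding power_diff_sumr2[of "(x + y) ^ p ^ k"] by (rule dvd_mult2)
  moreover have "of_nat p dvd (?u + ?v) ^ p - ?u ^ p - ?v ^ p"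
    by (rule prime_dvd_power_add_sub_power[OF assms])
  ultimately have "of_nat p dvd
      (((x + y) ^ p ^ k) ^ p - (?u + ?v) ^ p) + ((?u + ?v) ^ p - ?u ^ p - ?v ^ p)"
    by (rule dvd_add)
  then have "of_nat p dvd ((x + y) ^ p ^ k) ^ p - ?u ^ p - ?v ^ p"
    by (simp add: algebra_simps)
  then show ?case by (simp add: power_mult[symmetric] mult.commute)
qed

text \<open>For e = p^n this is the cyclotomic polynomial \<Phi>_{p^(n+1)}.\<close>

definition geometric_poly :: "nat \<Rightarrow> nat \<Rightarrow> int poly" where
  "geometric_poly p e = (\<Sum>k<p. monom 1 (k * e))"

lemma geometric_poly_mult: "geometric_poly p e * (monom 1 e - 1) = monom 1 (p * e) - 1"
proof -
  have "geometric_poly p e * (monom 1 e - 1) = (\<Sum>k<p. monom 1 (Suc k * e) - monom 1 (k * e))"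
    unfolding geometric_poly_def sum_distrib_right
    by (rule sum.cong) (auto simp: algebra_simps mult_monom)
  also have "\<dots> = monom 1 (p * e) - 1"
    by (subst sum_lessThan_telescope) (simp add: monom_0 one_pCons)
  finally show ?thesis .
qed

lemma
  assumes "j > 0"
  shows degree_monom_1_minus_1: "degree (monom 1 j - 1 :: 'a::comm_ring_1 poly) = j"
    and lead_coeff_monom_1_minus_1: "lead_coeff (monom 1 j - 1 :: 'a::comm_ring_1 poly) = 1"
    and monom_1_minus_1_neq_0: "monom 1 j - 1 \<noteq> (0 :: 'a::comm_ring_1 poly)"
proof -
  have coeff_j: "coeff (monom 1 j - 1 :: 'a poly) j = 1"
    using assms by (simp add: coeff_1)
  then show "monom 1 j - 1 \<noteq> (0 :: 'a poly)"
    by (metis coeff_0 zero_neq_one)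
  have "degree (monom 1 j - 1 :: 'a poly) \<le> j"
    by (rule degree_diff_le) (auto simp: degree_monom_eq)
  with coeff_j show deg: "degree (monom 1 j - 1 :: 'a poly) = j"
    by (metis le_antisym le_degree zero_neq_one)
  show "lead_coeff (monom 1 j - 1 :: 'a poly) = 1"
    unfolding deg by (fact coeff_j)
qed

lemma
  assumes "p > 0" "e > 0"
  shows degree_geometric_poly: "degree (geometric_poly p e) = p * e - e"
    and lead_coeff_geometric_poly: "lead_coeff (geometric_poly p e) = 1"
proof -
  have pe: "p * e > 0" using assms by simp
  have "geometric_poly p e \<noteq> 0"
    using geometric_poly_mult[of p e] monom_1_minus_1_neq_0[OF pe] by auto
  then have "degree (geometric_poly p e * (monom 1 e - 1)) = degree (geometric_poly p e) + e"
    using degree_mult_eq monom_1_minus_1_neq_0[OF assms(2)] degree_monom_1_minus_1[OF assms(2)]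
    by metis
  moreover have "degree (geometric_poly p e * (monom 1 e - 1)) = p * e"
    unfolding geometric_poly_mult by (rule degree_monom_1_minus_1[OF pe])
  ultimately show "degree (geometric_poly p e) = p * e - e" by simp
  have "lead_coeff (geometric_poly p e * (monom 1 e - 1)) = 1"
    unfolding geometric_poly_mult by (rule lead_coeff_monom_1_minus_1[OF pe])
  then show "lead_coeff (geometric_poly p e) = 1"
    by (metis lead_coeff_mult lead_coeff_monom_1_minus_1[OF assms(2)] mult.right_neutral)
qed

lemma poly_geometric_poly_1 [simp]: "poly (geometric_poly p e) 1 = int p"
  by (simp add: geometric_poly_def poly_sum poly_monom)

lemma prime_not_dvd_coeff_mult:
  fixes A B :: "int poly" and q :: int
  assumes "prime q" and below: "\<And>j. j < i \<Longrightarrow> q dvd coeff A j"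
    and "\<not> q dvd coeff A i" "\<not> q dvd coeff B 0"
  shows "\<not> q dvd coeff (A * B) i"
proof
  have "coeff (A * B) i = coeff A i * coeff B 0 + (\<Sum>j<i. coeff A j * coeff B (i - j))"
    unfolding coeff_mult lessThan_Suc_atMost[symmetric] sum.lessThan_Suc by simp
  moreover have "q dvd (\<Sum>j<i. coeff A j * coeff B (i - j))"
    by (rule dvd_sum) (simp add: below)
  moreover assume "q dvd coeff (A * B) i"
  ultimately have "q dvd coeff A i * coeff B 0"
    by (simp add: dvd_add_left_iff)
  with assms show False by (simp add: prime_dvd_mult_iff)
qed

lemma eisenstein_criterion:
  fixes A B :: "int poly" and q :: int
  assumes q: "prime q"
    and low: "\<And>i. i < degree (A * B) \<Longrightarrow> q dvd coeff (A * B) i"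
    and const: "\<not> q\<^sup>2 dvd coeff (A * B) 0"
    and lead: "\<not> q dvd lead_coeff (A * B)"
  shows "degree A = 0 \<or> degree B = 0"
proof (rule ccontr)
  assume "\<not> ?thesis"
  then have "degree A > 0" "degree B > 0" by auto
  have False if F: "q dvd coeff F 0" and G: "degree G > 0" and FG: "F * G = A * B" for F G
  proof -
    have "lead_coeff F * lead_coeff G = lead_coeff (A * B)"
      by (simp add: FG[symmetric] lead_coeff_mult)
    with lead have lead_F: "\<not> q dvd lead_coeff F" by (metis dvd_mult2)
    then have "F \<noteq> 0" by auto
    have "\<not> q dvd coeff G 0"
    proof
      assume "q dvd coeff G 0"
      with F have "q * q dvd coeff (F * G) 0" by (simp add: coeff_mult_0 mult_dvd_mono)
      with const FG show False by (simp add: power2_eq_square)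
    qed
    define i where "i = (LEAST i. \<not> q dvd coeff F i)"
    have not_dvd_i: "\<not> q dvd coeff F i" unfolding i_def using lead_F by (rule LeastI)
    have "i \<le> degree F" unfolding i_def using lead_F by (rule Least_le)
    moreover have "degree (F * G) = degree F + degree G"
      using \<open>F \<noteq> 0\<close> G by (intro degree_mult_eq) auto
    ultimately have "q dvd coeff (F * G) i"
      using low G unfolding FG by simp
    moreover have "\<And>j. j < i \<Longrightarrow> q dvd coeff F j"
      unfolding i_def using not_less_Least by blast
    ultimately show False
      using prime_not_dvd_coeff_mult[OF q _ not_dvd_i \<open>\<not> q dvd coeff G 0\<close>] by blast
  qed
  moreover have "q dvd coeff A 0 * coeff B 0"
  proof -
    have "A \<noteq> 0" "B \<noteq> 0" using \<open>degree A > 0\<close> \<open>degree B > 0\<close> by auto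
    then have "0 < degree (A * B)" using \<open>degree A > 0\<close> by (simp add: degree_mult_eq)
    then show ?thesis using low[of 0] by (simp add: coeff_mult_0)
  qed
  then have "q dvd coeff A 0 \<or> q dvd coeff B 0" using q by (simp add: prime_dvd_mult_iff)
  ultimately show False
    using \<open>degree A > 0\<close> \<open>degree B > 0\<close> mult.commute[of B A] by blast
qed

lemma pcompose_monom_1: "pcompose (monom 1 j) q = q ^ j"
  by (induction j) (simp_all add: monom_altdef pcompose_mult pcompose_pCons pcompose_1)

lemma prime_dvd_shifted_power_sub_monom:
  assumes "prime p"
  shows "[:int p:] dvd [:1, 1:] ^ p ^ k - monom 1 (p ^ k) - 1"
proof -
  have "[:1, 1 :: int:] = monom 1 1 + 1" by (simp add: monom_altdef one_pCons)
  then show ?thesis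
    using prime_dvd_power_add_sub_power_prime_power[OF assms, of "monom 1 1 :: int poly" 1 k]
    by (simp add: monom_power of_nat_poly)
qed

text \<open>Modulo p, (X+1)^e - 1 \<equiv> X^e and (X+1)^{pe} - 1 \<equiv> X^{pe} (for e a power of p), so the
  shifted polynomial S satisfies S X^e \<equiv> X^{pe}: all coefficients of S below the top one are
  divisible by p.\<close>

lemma prime_dvd_coeff_geometric_poly_shift:
  assumes p: "prime p" and i: "i < degree (geometric_poly p (p ^ n))"
  shows "int p dvd coeff (pcompose (geometric_poly p (p ^ n)) [:1, 1:]) i"
proof -
  let ?e = "p ^ n" and ?X1 = "[:1, 1 :: int:]"
  let ?S = "pcompose (geometric_poly p ?e) ?X1"
  have "p > 0" using p prime_gt_0_nat by blast
  have "?S * (?X1 ^ ?e - 1) = ?X1 ^ (p * ?e) - 1"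
    using arg_cong[OF geometric_poly_mult[of p ?e], of "\<lambda>f. pcompose f ?X1"]
    by (simp add: pcompose_mult pcompose_diff pcompose_monom_1 pcompose_1)
  then have "?S * monom 1 ?e - monom 1 (p * ?e)
      = (?X1 ^ (p * ?e) - monom 1 (p * ?e) - 1) - ?S * (?X1 ^ ?e - monom 1 ?e - 1)"
    by (simp add: algebra_simps)
  also have "[:int p:] dvd \<dots>"
    using prime_dvd_shifted_power_sub_monom[OF p, of "Suc n", unfolded power_Suc]
      dvd_mult[OF prime_dvd_shifted_power_sub_monom[OF p, of n], of ?S]
    by (rule dvd_diff)
  finally have "int p dvd coeff (?S * monom 1 ?e - monom 1 (p * ?e)) (i + ?e)"
    by (simp only: const_poly_dvd_iff)
  moreover have "i + ?e < p * ?e"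
    using i degree_geometric_poly[of p ?e] \<open>p > 0\<close> by simp
  ultimately show ?thesis
    by (simp add: mult.commute[of ?S] coeff_monom_mult)
qed

lemma geometric_poly_prime_power_irreducible:
  assumes p: "prime p" and AB: "A * B = geometric_poly p (p ^ n)"
  shows "degree A = 0 \<or> degree B = 0"
proof -
  let ?X1 = "[:1, 1 :: int:]"
  let ?S = "pcompose (geometric_poly p (p ^ n)) ?X1"
  have "p > 0" using p prime_gt_0_nat by blast
  have S: "pcompose A ?X1 * pcompose B ?X1 = ?S"
    by (simp add: AB[symmetric] pcompose_mult)
  have "degree (pcompose A ?X1) = 0 \<or> degree (pcompose B ?X1) = 0"
  proof (rule eisenstein_criterion)
    show "prime (int p)" using p by simp
    show "int p dvd coeff (pcompose A ?X1 * pcompose B ?X1) i"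
      if "i < degree (pcompose A ?X1 * pcompose B ?X1)" for i
      using that prime_dvd_coeff_geometric_poly_shift[OF p] unfolding S by (simp add: degree_pcompose)
    have "\<not> int p ^ 2 dvd int p"
    proof
      assume "int p ^ 2 dvd int p"
      then have "int p * int p dvd int p * 1" by (simp add: power2_eq_square)
      then have "p dvd 1" using \<open>p > 0\<close> by (subst (asm) dvd_mult_cancel_left) simp
      with p show False by simp
    qed
    then show "\<not> int p ^ 2 dvd coeff (pcompose A ?X1 * pcompose B ?X1) 0"
      unfolding S by simp
    have "lead_coeff ?S = 1"
      using lead_coeff_geometric_poly[of p "p ^ n"] \<open>p > 0\<close> by (simp add: lead_coeff_comp)
    then show "\<not> int p dvd lead_coeff (pcompose A ?X1 * pcompose B ?X1)"
      unfolding S using prime_gt_1_nat[OF p] by simp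
  qed
  then show ?thesis by (simp add: degree_pcompose)
qed

definition ipoly :: "int poly \<Rightarrow> 'a::comm_ring_1 \<Rightarrow> 'a" where
  "ipoly f z = poly (map_poly of_int f) z"

lemma ipoly_add: "ipoly (f + g) z = ipoly f z + ipoly g z"
proof -
  have "map_poly of_int (f + g) = map_poly of_int f + (map_poly of_int g :: 'a poly)"
    by (rule poly_eqI) (simp add: coeff_map_poly)
  then show ?thesis by (simp add: ipoly_def)
qed

lemma ipoly_mult: "ipoly (f * g) z = ipoly f z * ipoly g z"
proof -
  have "map_poly of_int (f * g) = map_poly of_int f * (map_poly of_int g :: 'a poly)"
    by (rule poly_eqI) (simp add: coeff_map_poly coeff_mult of_int_sum)
  then show ?thesis by (simp add: ipoly_def)
qed

lemma ipoly_smult: "ipoly (smult c f) z = of_int c * ipoly f z"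
  by (simp add: ipoly_def map_poly_smult)

lemma ipoly_const: "ipoly [:c:] z = of_int c"
  by (simp add: ipoly_def map_poly_pCons)

lemma ipoly_sum: "ipoly (sum f A) z = (\<Sum>a\<in>A. ipoly (f a) z)"
  by (induction A rule: infinite_finite_induct) (simp_all add: ipoly_add ipoly_def[of 0])

lemma ipoly_monom_1: "ipoly (monom 1 j) z = z ^ j"
  by (simp add: ipoly_def map_poly_monom poly_monom)

lemma content_eq_1_if_monic:
  fixes F :: "int poly"
  assumes "lead_coeff F = 1"
  shows "content F = 1"
proof -
  have "content F dvd 1" using content_dvd_coeff[of F "degree F"] assms by simp
  then show ?thesis using is_unit_content_iff by blast
qed

lemma degree_le_if_common_root:
  fixes F R :: "int poly" and z :: "'a::{comm_ring_1, ring_char_0}"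
  assumes monic: "lead_coeff F = 1"
    and irreducible: "\<And>A B. A * B = F \<Longrightarrow> degree A = 0 \<or> degree B = 0"
    and F_root: "ipoly F z = 0" and "R \<noteq> 0" and R_root: "ipoly R z = 0"
  shows "degree F \<le> degree R"
  using \<open>R \<noteq> 0\<close> R_root
proof (induction "degree R" arbitrary: R rule: less_induct)
  case less
  obtain q r where qr: "pseudo_divmod F R = (q, r)" by (metis surj_pair)
  define c where "c = lead_coeff R ^ (Suc (degree F) - degree R)"
  have "c \<noteq> 0" using less.prems by (simp add: c_def)
  have division: "smult c F = R * q + r"
    using pseudo_divmod(1)[OF less.prems(1) qr] by (simp add: c_def)
  show ?case
  proof (cases "r = 0")
    case False
    have "ipoly r z = 0"
      using arg_cong[OF division, of "\<lambda>f. ipoly f z"] F_root less.prems(2)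
      by (simp add: ipoly_smult ipoly_add ipoly_mult)
    moreover have "degree r < degree R"
      using pseudo_divmod(2)[OF less.prems(1) qr] False by simp
    ultimately have "degree F \<le> degree r"
      using less.hyps False by blast
    with \<open>degree r < degree R\<close> show ?thesis by simp
  next
    case True
    have pp_division: "smult (sgn c) F = primitive_part R * primitive_part q"
      using arg_cong[OF division, of primitive_part] True
      by (simp add: primitive_part_smult primitive_part_mult primitive_part_prim
          content_eq_1_if_monic[OF monic])
    have "F = smult (sgn c) (smult (sgn c) F)"
      using \<open>c \<noteq> 0\<close> by (simp add: smult_smult)
    also have "\<dots> = primitive_part R * smult (sgn c) (primitive_part q)"
      by (simp only: pp_division mult_smult_right)
    finally have factor: "primitive_part R * smult (sgn c) (primitive_part q) = F" ..
    have "degree R \<noteq> 0"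
    proof
      assume "degree R = 0"
      then obtain a where "R = [:a:]" by (metis degree_eq_zeroE)
      with less.prems show False by (simp add: ipoly_const)
    qed
    then have "degree (smult (sgn c) (primitive_part q)) = 0"
      using irreducible[OF factor] by simp
    moreover have "smult (sgn c) (primitive_part q) \<noteq> 0"
      using factor monic by auto
    then have "degree F = degree R + degree (smult (sgn c) (primitive_part q))"
      using degree_mult_eq[of "primitive_part R"] less.prems(1) unfolding factor[symmetric] by simp
    ultimately show ?thesis by simp
  qed
qed

lemma dvd_if_common_root:
  fixes F P :: "int poly" and z :: "'a::{comm_ring_1, ring_char_0}"
  assumes monic: "lead_coeff F = 1"
    and irreducible: "\<And>A B. A * B = F \<Longrightarrow> degree A = 0 \<or> degree B = 0"
    and F_root: "ipoly F z = 0" and P_root: "ipoly P z = 0"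
  shows "F dvd P"
proof -
  have "F \<noteq> 0" using monic by auto
  obtain q r where qr: "pseudo_divmod P F = (q, r)" by (metis surj_pair)
  have division: "P = F * q + r"
    using pseudo_divmod(1)[OF \<open>F \<noteq> 0\<close> qr] monic by simp
  have "ipoly r z = 0"
    using arg_cong[OF division, of "\<lambda>f. ipoly f z"] F_root P_root by (simp add: ipoly_add ipoly_mult)
  moreover have "r = 0 \<or> degree r < degree F"
    by (rule pseudo_divmod(2)[OF \<open>F \<noteq> 0\<close> qr])
  ultimately have "r = 0"
    using degree_le_if_common_root[OF monic irreducible F_root, of r] by linarith
  with division show ?thesis by simp
qed

lemma cis_2pi_frac_eq_1_imp_dvd:
  assumes "M > 0" "cis (2 * pi * real_of_int y / real M) = 1"
  shows "int M dvd y"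
proof -
  have "cos (2 * pi * real_of_int y / real M) = 1" using assms(2) by (simp add: complex_eq_iff)
  then obtain t :: int where "2 * pi * real_of_int y / real M = real_of_int t * 2 * pi"
    by (subst (asm) cos_one_2pi_int) blast
  then have "real_of_int y = real_of_int (t * int M)" using assms(1) by (simp add: field_simps)
  then show ?thesis by (simp only: of_int_eq_iff) simp
qed

lemma cis_2pi_frac_mod:
  assumes "M > 0" "y mod int M = y' mod int M"
  shows "cis (2 * pi * real_of_int y / real M) = cis (2 * pi * real_of_int y' / real M)"
proof -
  obtain t where t: "y = y' + int M * t" using assms(2) by (metis mod_eqE)
  have "cis (2 * pi * real_of_int y / real M)
      = cis (2 * pi * real_of_int y' / real M) * cis (2 * pi * real_of_int t)"
    using assms(1) by (simp add: cis_mult t field_simps)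
  then show ?thesis by simp
qed

lemma cis_2pi_frac_power:
  assumes "p > 0" "k \<le> N"
  shows "cis (2 * pi * real c / real (p ^ k)) = cis (2 * pi / real (p ^ N)) ^ (c * p ^ (N - k))"
proof -
  have "real (p ^ N) = real (p ^ k) * real (p ^ (N - k))"
    using assms(2) by (simp add: power_add[symmetric])
  then show ?thesis using assms(1) by (simp add: DeMoivre field_simps)
qed

lemma ipoly_geometric_poly_root:
  assumes p: "prime p" and "\<not> p dvd y"
  shows "ipoly (geometric_poly p (p ^ n)) (cis (2 * pi / real (p ^ Suc n)) ^ y) = 0"
proof -
  have "p > 0" using p prime_gt_0_nat by blast
  define u where "u = cis (2 * pi * real_of_int (int y) / real p)"
  have "(cis (2 * pi / real (p ^ Suc n)) ^ y) ^ (k * p ^ n) = u ^ k" for k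
    unfolding u_def DeMoivre power_mult[symmetric] using \<open>p > 0\<close> by (simp add: field_simps)
  then have "ipoly (geometric_poly p (p ^ n)) (cis (2 * pi / real (p ^ Suc n)) ^ y) = (\<Sum>k<p. u ^ k)"
    by (simp add: geometric_poly_def ipoly_sum ipoly_monom_1)
  also have "\<dots> = (u ^ p - 1) / (u - 1)"
  proof (rule geometric_sum)
    show "u \<noteq> 1"
      unfolding u_def using cis_2pi_frac_eq_1_imp_dvd[OF \<open>p > 0\<close>, of "int y"] assms(2)
      by (auto simp only: int_dvd_int_iff)
  qed
  also have "u ^ p = 1" unfolding u_def DeMoivre using \<open>p > 0\<close> by simp
  finally show ?thesis by simp
qed

lemma
  fixes p n y :: nat and b :: "'i \<Rightarrow> nat"
  defines "\<zeta> \<equiv> cis (2 * pi / real (p ^ Suc n))"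
  assumes p: "prime p" and vanish: "(\<Sum>j\<in>A. \<zeta> ^ b j) = 0"
  shows prime_power_roots_sum_zero_dvd_card: "p dvd card A"
    and prime_power_roots_sum_zero_conjugate: "\<not> p dvd y \<Longrightarrow> (\<Sum>j\<in>A. (\<zeta> ^ y) ^ b j) = 0"
proof -
  let ?F = "geometric_poly p (p ^ n)"
  define P where "P = (\<Sum>j\<in>A. monom (1 :: int) (b j))"
  have "p > 0" using p prime_gt_0_nat by blast
  have ipoly_P: "ipoly P w = (\<Sum>j\<in>A. w ^ b j)" for w :: complex
    by (simp add: P_def ipoly_sum ipoly_monom_1)
  have root: "ipoly ?F (\<zeta> ^ y) = 0" if "\<not> p dvd y" for y
    unfolding \<zeta>_def using ipoly_geometric_poly_root[OF p that] .
  have "?F dvd P"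
  proof (rule dvd_if_common_root)
    show "lead_coeff ?F = 1" using lead_coeff_geometric_poly \<open>p > 0\<close> by simp
    show "\<And>G H. G * H = ?F \<Longrightarrow> degree G = 0 \<or> degree H = 0"
      by (rule geometric_poly_prime_power_irreducible[OF p])
    show "ipoly ?F \<zeta> = 0" using root[of 1] p by (simp add: prime_nat_iff)
    show "ipoly P \<zeta> = 0" using vanish by (simp add: ipoly_P)
  qed
  then obtain Q where Q: "P = ?F * Q" ..
  have "int (card A) = poly P 1"
    by (simp add: P_def poly_sum poly_monom)
  also have "\<dots> = int p * poly Q 1" by (simp add: Q)
  finally show "p dvd card A" by (metis dvd_triv_left int_dvd_int_iff)
  assume "\<not> p dvd y"
  then show "(\<Sum>j\<in>A. (\<zeta> ^ y) ^ b j) = 0"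
    using root by (simp add: ipoly_P[symmetric] Q ipoly_mult)
qed

lemma Zp_mod_power:
  assumes "a \<in> Zp p" "k \<le> N"
  shows "a N mod int p ^ k = a k"
  using assms(2)
proof (induction N rule: dec_induct)
  case base
  show ?case using assms(1) by (simp add: Zp_def)
next
  case (step N)
  have "a (Suc N) mod int p ^ N = a N" using assms(1) by (simp add: Zp_def)
  moreover have "int p ^ k dvd int p ^ N" using step(1) by (simp add: le_imp_power_dvd)
  ultimately show ?case using step.IH by (metis mod_mod_cancel)
qed

lemma Zp_units_not_dvd:
  assumes "x \<in> Zp_units p" "N > 0"
  shows "\<not> int p dvd x N"
proof
  assume "int p dvd x N"
  moreover have "x N mod int p ^ 1 = x 1"
    using assms by (intro Zp_mod_power) (auto simp: Zp_units_def)
  ultimately show False using assms(1) by (simp add: Zp_units_def)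
qed

lemma chi_eq_root_power:
  assumes "p > 0" "\<xi> \<in> Qp p" "fst \<xi> \<le> N"
  shows "chi p \<xi> = cis (2 * pi / real (p ^ N)) ^ (nat (snd \<xi> (fst \<xi>)) * p ^ (N - fst \<xi>))"
proof -
  have "snd \<xi> (fst \<xi>) \<ge> 0" using assms(2) by (auto simp: Qp_def Zp_def)
  then show ?thesis
    using cis_2pi_frac_power[OF assms(1,3), of "nat (snd \<xi> (fst \<xi>))"]
    by (simp add: chi_def qp_frac_def)
qed

lemma chi_qp_scale_eq_root_power:
  assumes "p > 0" "x \<in> Zp p" "\<xi> \<in> Qp p" "fst \<xi> \<le> N"
  shows "chi p (qp_scale p x \<xi>)
    = (cis (2 * pi / real (p ^ N)) ^ nat (x N)) ^ (nat (snd \<xi> (fst \<xi>)) * p ^ (N - fst \<xi>))"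
proof -
  obtain k a where \<xi>: "\<xi> = (k, a)" by fastforce
  have "x N \<ge> 0" "a k \<ge> 0" using assms(2,3) by (auto simp: \<xi> Qp_def Zp_def)
  have "(x k * a k) mod int p ^ k mod int (p ^ k) = x N * a k mod int (p ^ k)"
    using Zp_mod_power[OF assms(2), of k N] assms(4)
    by (simp add: \<xi> mod_mult_left_eq[symmetric, of "x N"])
  then have "chi p (qp_scale p x \<xi>) = cis (2 * pi * real (nat (x N) * nat (a k)) / real (p ^ k))"
    using cis_2pi_frac_mod[of "p ^ k"] assms(1) \<open>x N \<ge> 0\<close> \<open>a k \<ge> 0\<close>
    by (simp add: \<xi> chi_def qp_frac_def qp_scale_def zp_mult_def)
  also have "\<dots> = (cis (2 * pi / real (p ^ N)) ^ nat (x N)) ^ (nat (a k) * p ^ (N - k))"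
    using cis_2pi_frac_power[OF assms(1), of k N "nat (x N) * nat (a k)"] assms(4)
    by (simp add: \<xi> power_mult)
  finally show ?thesis by (simp add: \<xi>)
qed

theorem lemma2p6:
  fixes p m :: nat and \<xi> :: "nat \<Rightarrow> nat \<times> (nat \<Rightarrow> int)"
  assumes "prime p"
    and "\<forall>j<m. \<xi> j \<in> Qp p"
    and "(\<Sum>j<m. chi p (\<xi> j)) = 0"
  shows "p dvd m \<and> (\<forall>x\<in>Zp_units p. (\<Sum>j<m. chi p (qp_scale p x (\<xi> j))) = 0)"
proof -
  have "p > 0" using assms(1) prime_gt_0_nat by blast
  define n where "n = Max ((\<lambda>j. fst (\<xi> j)) ` {..<m})"
  have level: "fst (\<xi> j) \<le> Suc n" if "j < m" for j
    using that unfolding n_def by (simp add: le_SucI)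
  define \<zeta> where "\<zeta> = cis (2 * pi / real (p ^ Suc n))"
  define b where "b j = nat (snd (\<xi> j) (fst (\<xi> j))) * p ^ (Suc n - fst (\<xi> j))" for j
  have "chi p (\<xi> j) = \<zeta> ^ b j" if "j < m" for j
    using chi_eq_root_power[OF \<open>p > 0\<close> _ level[OF that]] assms(2) that
    by (simp add: \<zeta>_def b_def)
  then have vanish: "(\<Sum>j<m. \<zeta> ^ b j) = 0"
    using assms(3) by simp
  have "p dvd m"
    using prime_power_roots_sum_zero_dvd_card[OF assms(1), of n b "{..<m}"] vanish
    by (simp add: \<zeta>_def)
  moreover have "(\<Sum>j<m. chi p (qp_scale p x (\<xi> j))) = 0" if x: "x \<in> Zp_units p" for x
  proof -
    have "\<not> p dvd nat (x (Suc n))"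
      using Zp_units_not_dvd[OF x] x by (auto simp: Zp_units_def Zp_def int_dvd_int_iff[symmetric])
    then have "(\<Sum>j<m. (\<zeta> ^ nat (x (Suc n))) ^ b j) = 0"
      using prime_power_roots_sum_zero_conjugate[OF assms(1)] vanish by (simp add: \<zeta>_def)
    moreover have "chi p (qp_scale p x (\<xi> j)) = (\<zeta> ^ nat (x (Suc n))) ^ b j" if "j < m" for j
      using chi_qp_scale_eq_root_power[OF \<open>p > 0\<close> _ _ level[OF that]] x assms(2) that
      by (simp add: \<zeta>_def b_def Zp_units_def)
    ultimately show ?thesis by simp
  qed
  ultimately show ?thesis by blast
qed

end
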